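(* Let $\Omega$ be a compact metric space, $T:\Omega\to\Omega$ a homeomorphism, $\mathcal{H}$ a proper unique visibility Gromov hyperbolic space which is strongly hyperbolic of parameter $\varepsilon>0$ with respect to a base point $p\in\mathcal{H}$, and $A:\Omega\to\mathrm{Isom}(\mathcal{H})$ continuous for the topology of uniform convergence on bounded sets. Let $\alpha:\Omega\to\partial\mathcal{H}$ be a continuous section with $A^*(\omega)\cdot\alpha(\omega)=\alpha(T\omega)$ for all $\omega$, and define $\phi(\omega)=-b_{p,\alpha(T\omega)}(A(\omega)\cdot p)$. If $(T,A)$ is $\tau$-H\"older and $\alpha$ is $\tau$-H\"older with respect to the metric $\varrho_\varepsilon$ on $\partial\mathcal{H}$ (i.e. $\varrho_\varepsilon(\alpha(\omega_1),\alpha(\omega_2))\le C d_\Omega(\omega_1,\omega_2)^\tau$ for some $C$), then $\phi$ is $\tau$-H\"older.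
   Context: Gromov product: $(x,y)_p=\tfrac12\big(d_{\mathcal{H}}(x,p)+d_{\mathcal{H}}(y,p)-d_{\mathcal{H}}(x,y)\big)$ for $x,y\in\mathcal{H}$; $\varrho_\varepsilon(x,y)=e^{-\varepsilon(x,y)_p}$. $\mathcal{H}$ is strongly hyperbolic of parameter $\varepsilon$ if $\varrho_\varepsilon(x,y)\le\varrho_\varepsilon(x,z)+\varrho_\varepsilon(y,z)$ for all $x,y,z\in\mathcal{H}$. In that case the Gromov product extends continuously to $\mathcal{H}\cup\partial\mathcal{H}$ via $(x,y)_p=\lim_i(x_i,y_i)_p$ for $x_i\to x$, $y_i\to y$ (independent of the sequences), and $\varrho_\varepsilon(x,y)=e^{-\varepsilon(x,y)_p}$ is a metric on $\partial\mathcal{H}$. A proper unique geodesic space is Gromov hyperbolic if geodesic triangles are $\delta$-slim for some $\delta$; $\partial\mathcal{H}$ is the set of classes of geodesic rays at bounded distance; unique visibility means any two distinct boundary points are ends of a unique bi-infinite geodesic. An isometry $A$ induces $A^*[\gamma]=[A\circ\gamma]$ on $\partial\mathcal{H}$. Busemann function: $b_{p,\alpha}(h)=\lim_n\big(d_{\mathcal{H}}(x_n,h)-d_{\mathcal{H}}(x_n,p)\big)$ for $x_n\to\alpha$. Continuity of $A$ for uniform convergence on bounded sets: for every bounded $K$, $\omega_0$, $\eta>0$ there is $\delta>0$ with $d_{\mathcal{H}}(A(\omega)h,A(\omega_0)h)<\eta$ for $h\in K$ when $d_\Omega(\omega,\omega_0)<\delta$. $(T,A)$ is $\tau$-H\"older: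 for every bounded $K\subset\mathcal{H}$ there is $C_K$ with $d_{\mathcal{H}}(A(\omega_1)h,A(\omega_2)h)\le C_K d_\Omega(\omega_1,\omega_2)^\tau$ for $h\in K$. *)

theory Defs
  imports "HOL-Analysis.Analysis"
begin

definition gromov :: "'h::metric_space \<Rightarrow> 'h \<Rightarrow> 'h \<Rightarrow> real" where
  "gromov p x y = (dist x p + dist y p - dist x y) / 2"

definition strongly_hyperbolic :: "real \<Rightarrow> 'h::metric_space \<Rightarrow> bool" where
  "strongly_hyperbolic \<epsilon> p \<longleftrightarrow>
     (\<forall>x y z::'h. exp (- \<epsilon> * gromov p x y) \<le> exp (- \<epsilon> * gromov p x z) + exp (- \<epsilon> * gromov p y z))"

definition proper_space :: "'h::metric_space itself \<Rightarrow> bool" where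
  "proper_space _ \<longleftrightarrow> (\<forall>(x::'h) r. compact (cball x r))"

definition geodesic_seg :: "('h::metric_space) \<Rightarrow> 'h \<Rightarrow> (real \<Rightarrow> 'h) \<Rightarrow> bool" where
  "geodesic_seg x y \<gamma> \<longleftrightarrow> \<gamma> 0 = x \<and> \<gamma> (dist x y) = y \<and>
     (\<forall>s\<in>{0..dist x y}. \<forall>t\<in>{0..dist x y}. dist (\<gamma> s) (\<gamma> t) = \<bar>s - t\<bar>)"

definition unique_geodesic_space :: "'h::metric_space itself \<Rightarrow> bool" where
  "unique_geodesic_space _ \<longleftrightarrow>
     (\<forall>x y::'h. (\<exists>\<gamma>. geodesic_seg x y \<gamma>) \<and>
        (\<forall>\<gamma> \<gamma>'. geodesic_seg x y \<gamma> \<longrightarrow> geodesic_seg x y \<gamma>' \<longrightarrow> (\<forall>t\<in>{0..dist x y}. \<gamma> t = \<gamma>' t)))"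

definition geoseg :: "'h::metric_space \<Rightarrow> 'h \<Rightarrow> 'h set" where
  "geoseg x y = (\<Union>\<gamma>\<in>{\<gamma>. geodesic_seg x y \<gamma>}. \<gamma> ` {0..dist x y})"

definition gromov_hyperbolic :: "'h::metric_space itself \<Rightarrow> bool" where
  "gromov_hyperbolic _ \<longleftrightarrow> (\<exists>\<delta>. \<forall>x y z::'h. \<forall>a\<in>geoseg x y. infdist a (geoseg y z \<union> geoseg x z) \<le> \<delta>)"

definition geodesic_ray :: "(real \<Rightarrow> 'h::metric_space) \<Rightarrow> bool" where
  "geodesic_ray \<gamma> \<longleftrightarrow> (\<forall>s\<ge>0. \<forall>t\<ge>0. dist (\<gamma> s) (\<gamma> t) = \<bar>s - t\<bar>)"

definition ray_class :: "(real \<Rightarrow> 'h::metric_space) \<Rightarrow> (real \<Rightarrow> 'h) set" where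
  "ray_class \<gamma> = {\<gamma>'. geodesic_ray \<gamma>' \<and> (\<exists>C. \<forall>t\<ge>0. dist (\<gamma> t) (\<gamma>' t) \<le> C)}"

definition gromov_boundary :: "(real \<Rightarrow> 'h::metric_space) set set" where
  "gromov_boundary = {ray_class \<gamma> |\<gamma>. geodesic_ray \<gamma>}"

definition bi_geodesic :: "(real \<Rightarrow> 'h::metric_space) \<Rightarrow> bool" where
  "bi_geodesic c \<longleftrightarrow> (\<forall>s t. dist (c s) (c t) = \<bar>s - t\<bar>)"

definition joins :: "(real \<Rightarrow> 'h::metric_space) \<Rightarrow> (real \<Rightarrow> 'h) set \<Rightarrow> (real \<Rightarrow> 'h) set \<Rightarrow> bool" where
  "joins c \<eta> \<xi> \<longleftrightarrow> bi_geodesic c \<and> c \<in> \<xi> \<and> (\<lambda>t. c (- t)) \<in> \<eta>"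

definition unique_visibility :: "'h::metric_space itself \<Rightarrow> bool" where
  "unique_visibility _ \<longleftrightarrow>
     (\<forall>\<xi>\<in>(gromov_boundary :: (real \<Rightarrow> 'h) set set). \<forall>\<eta>\<in>gromov_boundary. \<xi> \<noteq> \<eta> \<longrightarrow>
        (\<exists>c. joins c \<eta> \<xi>) \<and> (\<forall>c c'. joins c \<eta> \<xi> \<longrightarrow> joins c' \<eta> \<xi> \<longrightarrow> range c = range c'))"

definition conv_bd :: "'h::metric_space \<Rightarrow> (nat \<Rightarrow> 'h) \<Rightarrow> (real \<Rightarrow> 'h) set \<Rightarrow> bool" where
  "conv_bd p xs \<xi> \<longleftrightarrow> (\<exists>\<gamma>\<in>\<xi>. \<forall>M. \<exists>N T. \<forall>n\<ge>N. \<forall>t\<ge>T. gromov p (xs n) (\<gamma> t) \<ge> M)"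

definition bd_gromov :: "'h::metric_space \<Rightarrow> (real \<Rightarrow> 'h) set \<Rightarrow> (real \<Rightarrow> 'h) set \<Rightarrow> ereal" where
  "bd_gromov p \<xi> \<eta> =
     (let xs = (SOME xs. conv_bd p xs \<xi>); ys = (SOME ys. conv_bd p ys \<eta>)
      in lim (\<lambda>i. ereal (gromov p (xs i) (ys i))))"

definition rho :: "real \<Rightarrow> 'h::metric_space \<Rightarrow> (real \<Rightarrow> 'h) set \<Rightarrow> (real \<Rightarrow> 'h) set \<Rightarrow> real" where
  "rho \<epsilon> p \<xi> \<eta> = (if bd_gromov p \<xi> \<eta> = \<infinity> then 0 else exp (- \<epsilon> * real_of_ereal (bd_gromov p \<xi> \<eta>)))"

definition busemann :: "'h::metric_space \<Rightarrow> (real \<Rightarrow> 'h) set \<Rightarrow> 'h \<Rightarrow> real" where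
  "busemann p \<xi> h = (let xs = (SOME xs. conv_bd p xs \<xi>) in lim (\<lambda>n. dist (xs n) h - dist (xs n) p))"

definition isometry :: "('h::metric_space \<Rightarrow> 'h) \<Rightarrow> bool" where
  "isometry g \<longleftrightarrow> bij g \<and> (\<forall>x y. dist (g x) (g y) = dist x y)"

definition bd_act :: "('h::metric_space \<Rightarrow> 'h) \<Rightarrow> (real \<Rightarrow> 'h) set \<Rightarrow> (real \<Rightarrow> 'h) set" where
  "bd_act g \<xi> = ray_class (g \<circ> (SOME \<gamma>. \<gamma> \<in> \<xi>))"

end

theory Submission
  imports Defs
begin

(* Put q(w) = A(w)^-1 p. By equivariance and the invariance of Gromov products under isometries,
   phi(w) = d(p, q(w)) - 2 (alpha(w) . q(w))_p, where (xi . h)_p is the limit of (x_n . h)_p along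
   the sequence x_n -> xi chosen in the definitions of busemann and rho.  Strong hyperbolicity makes
   exp(-eps (x . y)_p) a pseudo-metric on H; hence (xi . h)_p is 1-Lipschitz in h, and
   exp(-eps (xi . h)_p) is 1-Lipschitz in xi for rho.  Since the points q(w) lie in a bounded set
   (compactness of Omega), this gives
     |phi(w1) - phi(w2)| <= 3 d(q(w1), q(w2)) + C rho(alpha(w1), alpha(w2)),
   and q is tau-Hoelder because A is tau-Hoelder on bounded sets. *)

lemma gromov_commute: "gromov p x y = gromov p y x"
  unfolding gromov_def by (simp add: dist_commute)

lemma gromov_le_dist: "gromov p x h \<le> dist h p"
  unfolding gromov_def using dist_triangle[of x p h] by (simp add: dist_commute)

lemma abs_gromov_diff_le: "\<bar>gromov p x h - gromov p x h'\<bar> \<le> dist h h'"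
  unfolding gromov_def abs_le_iff
  using dist_triangle[of x h h'] dist_triangle[of x h' h] dist_triangle[of h p h'] dist_triangle[of h' p h]
    dist_commute[of h' h]
  by (simp add: field_simps)

lemma gromov_ge_of_dist_le: "dist x y \<le> C \<Longrightarrow> dist x p - C \<le> gromov p x y"
  unfolding gromov_def using dist_triangle[of x p y] by (simp add: dist_commute)

lemma gromov_dist_preserving_ge:
  assumes "\<And>x y. dist (g x) (g y) = dist x y"
  shows "gromov p x y - dist (g p) p \<le> gromov p (g x) (g y)"
proof -
  have "dist x p \<le> dist (g x) p + dist (g p) p" "dist y p \<le> dist (g y) p + dist (g p) p"
    by (metis assms dist_commute dist_triangle)+
  then show ?thesis
    unfolding gromov_def using assms[of x y] by (simp add: field_simps)
qed

definition visual_dist :: "real \<Rightarrow> 'h::metric_space \<Rightarrow> 'h \<Rightarrow> 'h \<Rightarrow> real" where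
  "visual_dist \<epsilon> p x y = exp (- \<epsilon> * gromov p x y)"

lemma visual_dist_commute: "visual_dist \<epsilon> p x y = visual_dist \<epsilon> p y x"
  unfolding visual_dist_def by (simp add: gromov_commute)

lemma visual_dist_pos: "0 < visual_dist \<epsilon> p x y"
  unfolding visual_dist_def by simp

lemma visual_dist_triangle:
  "strongly_hyperbolic \<epsilon> p \<Longrightarrow> visual_dist \<epsilon> p x y \<le> visual_dist \<epsilon> p x z + visual_dist \<epsilon> p y z"
  unfolding visual_dist_def strongly_hyperbolic_def by blast

lemma abs_visual_dist_diff_le:
  assumes "strongly_hyperbolic \<epsilon> p"
  shows "\<bar>visual_dist \<epsilon> p x h - visual_dist \<epsilon> p y h\<bar> \<le> visual_dist \<epsilon> p x y"
  using visual_dist_triangle[OF assms, of x h y] visual_dist_triangle[OF assms, of y h x]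
  by (simp add: abs_le_iff visual_dist_commute)

lemma abs_visual_dist_diff_le2:
  assumes "strongly_hyperbolic \<epsilon> p"
  shows "\<bar>visual_dist \<epsilon> p x y - visual_dist \<epsilon> p x' y'\<bar> \<le> visual_dist \<epsilon> p x x' + visual_dist \<epsilon> p y y'"
  using abs_visual_dist_diff_le[OF assms, of x y x'] abs_visual_dist_diff_le[OF assms, of y x' y']
  by (simp add: abs_le_iff visual_dist_commute)

lemma visual_dist_le_of_gromov_ge:
  assumes "0 < \<epsilon>" "0 < e" "- ln e / \<epsilon> \<le> gromov p x y"
  shows "visual_dist \<epsilon> p x y \<le> e"
proof -
  have "- \<epsilon> * gromov p x y \<le> ln e"
    using assms by (simp add: field_simps)
  then show ?thesis
    unfolding visual_dist_def using assms(2) by (metis exp_le_cancel_iff exp_ln)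
qed

lemma gromov_eq_ln_visual_dist: "0 < \<epsilon> \<Longrightarrow> gromov p x y = - ln (visual_dist \<epsilon> p x y) / \<epsilon>"
  unfolding visual_dist_def by simp

text \<open>Since \<open>visual_dist \<epsilon> p x x > 0\<close>, a \<open>visual_Cauchy\<close> sequence necessarily escapes to the boundary.\<close>
definition visual_Cauchy :: "real \<Rightarrow> 'h::metric_space \<Rightarrow> (nat \<Rightarrow> 'h) \<Rightarrow> bool" where
  "visual_Cauchy \<epsilon> p xs \<longleftrightarrow> (\<forall>e>0. \<exists>N. \<forall>n\<ge>N. \<forall>m\<ge>N. visual_dist \<epsilon> p (xs n) (xs m) < e)"

lemma conv_bd_imp_visual_Cauchy:
  assumes eps: "0 < \<epsilon>" and strong: "strongly_hyperbolic \<epsilon> p" and conv: "conv_bd p xs \<xi>"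
  shows "visual_Cauchy \<epsilon> p xs"
  unfolding visual_Cauchy_def
proof (intro allI impI)
  fix e :: real assume e: "0 < e"
  obtain \<gamma> where "\<forall>M. \<exists>N T. \<forall>n\<ge>N. \<forall>t::real\<ge>T. M \<le> gromov p (xs n) (\<gamma> t)"
    using conv unfolding conv_bd_def by blast
  then obtain N T where NT: "\<And>n t. n \<ge> N \<Longrightarrow> t \<ge> T \<Longrightarrow> - ln (e/3) / \<epsilon> \<le> gromov p (xs n) (\<gamma> t)"
    by blast
  have near: "visual_dist \<epsilon> p (xs n) (\<gamma> T) \<le> e/3" if "n \<ge> N" for n
    using visual_dist_le_of_gromov_ge[OF eps _ NT] e that by simp
  have "visual_dist \<epsilon> p (xs n) (xs m) < e" if "n \<ge> N" "m \<ge> N" for n m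
    using visual_dist_triangle[OF strong, of "xs n" "xs m" "\<gamma> T"] near[OF that(1)] near[OF that(2)] e
    by linarith
  then show "\<exists>N. \<forall>n\<ge>N. \<forall>m\<ge>N. visual_dist \<epsilon> p (xs n) (xs m) < e" by blast
qed

lemma visual_Cauchy_dist_preserving:
  assumes eps: "0 < \<epsilon>" and g: "\<And>x y. dist (g x) (g y) = dist x y" and xs: "visual_Cauchy \<epsilon> p xs"
  shows "visual_Cauchy \<epsilon> p (\<lambda>n. g (xs n))"
  unfolding visual_Cauchy_def
proof (intro allI impI)
  fix e :: real assume e: "0 < e"
  define k where "k = exp (\<epsilon> * dist (g p) p)"
  have k: "0 < k" unfolding k_def by simp
  have distort: "visual_dist \<epsilon> p (g x) (g y) \<le> k * visual_dist \<epsilon> p x y" for x y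
  proof -
    have "- \<epsilon> * gromov p (g x) (g y) \<le> \<epsilon> * dist (g p) p + - \<epsilon> * gromov p x y"
      using mult_left_mono[OF gromov_dist_preserving_ge[OF g, of p x y], of \<epsilon>] eps
      by (simp add: algebra_simps)
    then show ?thesis unfolding visual_dist_def k_def by (simp add: exp_add[symmetric])
  qed
  obtain N where "\<forall>n\<ge>N. \<forall>m\<ge>N. visual_dist \<epsilon> p (xs n) (xs m) < e / k"
    using xs e k unfolding visual_Cauchy_def by (meson divide_pos_pos)
  then have "\<forall>n\<ge>N. \<forall>m\<ge>N. k * visual_dist \<epsilon> p (xs n) (xs m) < e"
    using k by (simp add: pos_less_divide_eq mult.commute)
  then have "\<forall>n\<ge>N. \<forall>m\<ge>N. visual_dist \<epsilon> p (g (xs n)) (g (xs m)) < e"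
    using distort by (meson order_le_less_trans)
  then show "\<exists>N. \<forall>n\<ge>N. \<forall>m\<ge>N. visual_dist \<epsilon> p (g (xs n)) (g (xs m)) < e" by blast
qed

lemma Cauchy_visual_dist:
  assumes strong: "strongly_hyperbolic \<epsilon> p" and xs: "visual_Cauchy \<epsilon> p xs" and ys: "visual_Cauchy \<epsilon> p ys"
  shows "Cauchy (\<lambda>n. visual_dist \<epsilon> p (xs n) (ys n))"
  unfolding Cauchy_def dist_real_def
proof (intro allI impI)
  fix e :: real assume "0 < e"
  then obtain N1 N2 where
    N1: "\<And>n m. n \<ge> N1 \<Longrightarrow> m \<ge> N1 \<Longrightarrow> visual_dist \<epsilon> p (xs n) (xs m) < e/2" and
    N2: "\<And>n m. n \<ge> N2 \<Longrightarrow> m \<ge> N2 \<Longrightarrow> visual_dist \<epsilon> p (ys n) (ys m) < e/2"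
    using xs ys unfolding visual_Cauchy_def by (meson half_gt_zero)
  have "\<bar>visual_dist \<epsilon> p (xs m) (ys m) - visual_dist \<epsilon> p (xs n) (ys n)\<bar> < e"
    if "m \<ge> max N1 N2" "n \<ge> max N1 N2" for m n
    using abs_visual_dist_diff_le2[OF strong, of "xs m" "ys m" "xs n" "ys n"] N1[of m n] N2[of m n] that
    by simp
  then show "\<exists>N. \<forall>m\<ge>N. \<forall>n\<ge>N. \<bar>visual_dist \<epsilon> p (xs m) (ys m) - visual_dist \<epsilon> p (xs n) (ys n)\<bar> < e"
    by blast
qed

definition gromov_lim :: "'h::metric_space \<Rightarrow> (nat \<Rightarrow> 'h) \<Rightarrow> 'h \<Rightarrow> real" where
  "gromov_lim p xs h = lim (\<lambda>n. gromov p (xs n) h)"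

lemma gromov_lim_tendsto:
  assumes eps: "0 < \<epsilon>" and strong: "strongly_hyperbolic \<epsilon> p" and xs: "visual_Cauchy \<epsilon> p xs"
  shows "(\<lambda>n. gromov p (xs n) h) \<longlonglongrightarrow> gromov_lim p xs h"
proof -
  define f where "f n = visual_dist \<epsilon> p (xs n) h" for n
  have "Cauchy f"
    unfolding Cauchy_def dist_real_def f_def
    using xs abs_visual_dist_diff_le[OF strong] unfolding visual_Cauchy_def
    by (meson order_le_less_trans)
  then obtain L where L: "f \<longlonglongrightarrow> L"
    using Cauchy_convergent convergent_def by blast
  have "exp (- \<epsilon> * dist h p) \<le> f n" for n
    using eps gromov_le_dist[of p "xs n" h] by (simp add: f_def visual_dist_def)
  then have "exp (- \<epsilon> * dist h p) \<le> L"
    using L by (simp add: LIMSEQ_le_const)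
  then have "0 < L"
    by (meson exp_gt_zero order_less_le_trans)
  then have "(\<lambda>n. - ln (f n) / \<epsilon>) \<longlonglongrightarrow> - ln L / \<epsilon>"
    using eps by (intro tendsto_intros L) auto
  then have "(\<lambda>n. gromov p (xs n) h) \<longlonglongrightarrow> - ln L / \<epsilon>"
    unfolding f_def gromov_eq_ln_visual_dist[OF eps, symmetric] .
  then show ?thesis
    unfolding gromov_lim_def by (metis limI)
qed

lemma visual_dist_tendsto_exp_gromov_lim:
  assumes "0 < \<epsilon>" "strongly_hyperbolic \<epsilon> p" "visual_Cauchy \<epsilon> p xs"
  shows "(\<lambda>n. visual_dist \<epsilon> p (xs n) h) \<longlonglongrightarrow> exp (- \<epsilon> * gromov_lim p xs h)"
  unfolding visual_dist_def by (intro tendsto_intros gromov_lim_tendsto[OF assms])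

lemma gromov_lim_le_dist:
  assumes "0 < \<epsilon>" "strongly_hyperbolic \<epsilon> p" "visual_Cauchy \<epsilon> p xs"
  shows "gromov_lim p xs h \<le> dist h p"
  using gromov_lim_tendsto[OF assms] by (rule LIMSEQ_le_const2) (auto intro: gromov_le_dist)

lemma abs_gromov_lim_diff_le:
  assumes "0 < \<epsilon>" "strongly_hyperbolic \<epsilon> p" "visual_Cauchy \<epsilon> p xs"
  shows "\<bar>gromov_lim p xs h - gromov_lim p xs h'\<bar> \<le> dist h h'"
proof -
  have "(\<lambda>n. \<bar>gromov p (xs n) h - gromov p (xs n) h'\<bar>) \<longlonglongrightarrow> \<bar>gromov_lim p xs h - gromov_lim p xs h'\<bar>"
    by (intro tendsto_intros gromov_lim_tendsto[OF assms])
  then show ?thesis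
    by (rule LIMSEQ_le_const2) (auto intro: abs_gromov_diff_le)
qed

lemma abs_exp_gromov_lim_diff_le:
  assumes eps: "0 < \<epsilon>" and strong: "strongly_hyperbolic \<epsilon> p"
    and xs: "visual_Cauchy \<epsilon> p xs" and ys: "visual_Cauchy \<epsilon> p ys"
    and R: "(\<lambda>n. visual_dist \<epsilon> p (xs n) (ys n)) \<longlonglongrightarrow> R"
  shows "\<bar>exp (- \<epsilon> * gromov_lim p xs h) - exp (- \<epsilon> * gromov_lim p ys h)\<bar> \<le> R"
proof -
  have "(\<lambda>n. \<bar>visual_dist \<epsilon> p (xs n) h - visual_dist \<epsilon> p (ys n) h\<bar>)
      \<longlonglongrightarrow> \<bar>exp (- \<epsilon> * gromov_lim p xs h) - exp (- \<epsilon> * gromov_lim p ys h)\<bar>"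
    by (intro tendsto_intros visual_dist_tendsto_exp_gromov_lim[OF eps strong xs]
        visual_dist_tendsto_exp_gromov_lim[OF eps strong ys])
  then show ?thesis
    by (rule LIMSEQ_le[OF _ R]) (auto intro: abs_visual_dist_diff_le[OF strong])
qed

lemma gromov_lim_eq_if_visual_dist_tendsto_0:
  assumes eps: "0 < \<epsilon>" and "strongly_hyperbolic \<epsilon> p"
    and "visual_Cauchy \<epsilon> p xs" "visual_Cauchy \<epsilon> p ys"
    and "(\<lambda>n. visual_dist \<epsilon> p (xs n) (ys n)) \<longlonglongrightarrow> 0"
  shows "gromov_lim p xs h = gromov_lim p ys h"
  using abs_exp_gromov_lim_diff_le[OF assms, of h] eps by simp

lemma gromov_lim_dist_preserving:
  assumes eps: "0 < \<epsilon>" and strong: "strongly_hyperbolic \<epsilon> p" and xs: "visual_Cauchy \<epsilon> p xs"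
    and g: "\<And>x y. dist (g x) (g y) = dist x y" and gq: "g q = p"
  shows "gromov_lim p (\<lambda>n. g (xs n)) (g p) = dist p q - gromov_lim p xs q"
proof -
  have "gromov p (g (xs n)) (g p) = dist p q - gromov p (xs n) q" for n
    using g[of "xs n" q] g[of "xs n" p] g[of p q] unfolding gromov_def gq
    by (simp add: dist_commute field_simps)
  then have "(\<lambda>n. gromov p (g (xs n)) (g p)) \<longlonglongrightarrow> dist p q - gromov_lim p xs q"
    by (auto intro!: tendsto_intros gromov_lim_tendsto[OF eps strong xs])
  moreover have "(\<lambda>n. gromov p (g (xs n)) (g p)) \<longlonglongrightarrow> gromov_lim p (\<lambda>n. g (xs n)) (g p)"
    by (rule gromov_lim_tendsto[OF eps strong visual_Cauchy_dist_preserving[OF eps g xs]])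
  ultimately show ?thesis
    using LIMSEQ_unique by blast
qed

definition bd_seq :: "'h::metric_space \<Rightarrow> (real \<Rightarrow> 'h) set \<Rightarrow> nat \<Rightarrow> 'h" where
  "bd_seq p \<xi> = (SOME xs. conv_bd p xs \<xi>)"

lemma ex_conv_bd:
  assumes "\<xi> \<in> gromov_boundary"
  shows "\<exists>xs. conv_bd p xs \<xi>"
proof -
  obtain \<gamma> where \<xi>: "\<xi> = ray_class \<gamma>" and ray: "geodesic_ray \<gamma>"
    using assms unfolding gromov_boundary_def by blast
  have "\<gamma> \<in> \<xi>"
    unfolding \<xi> ray_class_def using ray by auto
  define d0 where "d0 = dist (\<gamma> 0) p"
  have along_ray: "min s t - d0 \<le> gromov p (\<gamma> s) (\<gamma> t)" if "s \<ge> 0" "t \<ge> 0" for s t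
  proof -
    have "dist (\<gamma> s) (\<gamma> 0) = s" "dist (\<gamma> t) (\<gamma> 0) = t" "dist (\<gamma> s) (\<gamma> t) = \<bar>s - t\<bar>"
      using ray that unfolding geodesic_ray_def by auto
    moreover have "dist (\<gamma> s) (\<gamma> 0) \<le> dist (\<gamma> s) p + d0" "dist (\<gamma> t) (\<gamma> 0) \<le> dist (\<gamma> t) p + d0"
      unfolding d0_def by (metis dist_commute dist_triangle)+
    ultimately show ?thesis
      unfolding gromov_def by (auto simp: min_def abs_if)
  qed
  have "M \<le> gromov p (\<gamma> (real n)) (\<gamma> t)" if "nat \<lceil>M + d0\<rceil> \<le> n" "max 0 (M + d0) \<le> t" for M n t
    using along_ray[of "real n" t] that by linarith
  then have "conv_bd p (\<lambda>n. \<gamma> (real n)) \<xi>"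
    unfolding conv_bd_def using \<open>\<gamma> \<in> \<xi>\<close> by blast
  then show ?thesis by blast
qed

lemma conv_bd_bd_seq: "\<xi> \<in> gromov_boundary \<Longrightarrow> conv_bd p (bd_seq p \<xi>) \<xi>"
  unfolding bd_seq_def using ex_conv_bd by (rule someI_ex)

lemma visual_Cauchy_bd_seq:
  "0 < \<epsilon> \<Longrightarrow> strongly_hyperbolic \<epsilon> p \<Longrightarrow> \<xi> \<in> gromov_boundary \<Longrightarrow> visual_Cauchy \<epsilon> p (bd_seq p \<xi>)"
  using conv_bd_imp_visual_Cauchy conv_bd_bd_seq by blast

lemma busemann_eq_gromov_lim:
  assumes "0 < \<epsilon>" "strongly_hyperbolic \<epsilon> p" "\<xi> \<in> gromov_boundary"
  shows "busemann p \<xi> h = dist h p - 2 * gromov_lim p (bd_seq p \<xi>) h"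
proof -
  have "dist (bd_seq p \<xi> n) h - dist (bd_seq p \<xi> n) p = dist h p - 2 * gromov p (bd_seq p \<xi> n) h" for n
    unfolding gromov_def by (simp add: dist_commute field_simps)
  then have "(\<lambda>n. dist (bd_seq p \<xi> n) h - dist (bd_seq p \<xi> n) p)
      \<longlonglongrightarrow> dist h p - 2 * gromov_lim p (bd_seq p \<xi>) h"
    by (auto intro!: tendsto_intros gromov_lim_tendsto[OF assms(1,2) visual_Cauchy_bd_seq[OF assms]])
  then show ?thesis
    unfolding busemann_def Let_def bd_seq_def[symmetric] by (rule limI)
qed

lemma rho_eq_if_tendsto:
  fixes a :: "nat \<Rightarrow> real"
  assumes eps: "0 < \<epsilon>" and bd: "bd_gromov p \<xi> \<eta> = lim (\<lambda>n. ereal (a n))"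
    and R: "(\<lambda>n. exp (- \<epsilon> * a n)) \<longlonglongrightarrow> R"
  shows "rho \<epsilon> p \<xi> \<eta> = R"
proof -
  have "0 \<le> R"
    using R by (rule LIMSEQ_le_const) (auto intro: less_imp_le)
  then consider "0 < R" | "R = 0" by linarith
  then show ?thesis
  proof cases
    case 1
    have "a n = - ln (exp (- \<epsilon> * a n)) / \<epsilon>" for n
      using eps by simp
    moreover have "(\<lambda>n. - ln (exp (- \<epsilon> * a n)) / \<epsilon>) \<longlonglongrightarrow> - ln R / \<epsilon>"
      using 1 eps by (intro tendsto_intros R) auto
    ultimately have "(\<lambda>n. ereal (a n)) \<longlonglongrightarrow> ereal (- ln R / \<epsilon>)"
      by (intro tendsto_ereal) simp
    then have "bd_gromov p \<xi> \<eta> = ereal (- ln R / \<epsilon>)"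
      unfolding bd by (rule limI)
    then show ?thesis
      unfolding rho_def using eps 1 by simp
  next
    case 2
    have "\<forall>\<^sub>F n in sequentially. ereal r < ereal (a n)" for r
    proof -
      have "\<forall>\<^sub>F n in sequentially. exp (- \<epsilon> * a n) < exp (- \<epsilon> * r)"
        using order_tendstoD(2)[OF R, of "exp (- \<epsilon> * r)"] 2 by simp
      then show ?thesis
        by (rule eventually_mono) (simp add: eps)
    qed
    then have "(\<lambda>n. ereal (a n)) \<longlonglongrightarrow> \<infinity>"
      by (simp add: tendsto_PInfty)
    then have "bd_gromov p \<xi> \<eta> = \<infinity>"
      unfolding bd by (rule limI)
    then show ?thesis
      unfolding rho_def using 2 by simp
  qed
qed

lemma visual_dist_bd_seq_tendsto_rho:
  assumes eps: "0 < \<epsilon>" and strong: "strongly_hyperbolic \<epsilon> p"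
    and "\<xi> \<in> gromov_boundary" "\<eta> \<in> gromov_boundary"
  shows "(\<lambda>n. visual_dist \<epsilon> p (bd_seq p \<xi> n) (bd_seq p \<eta> n)) \<longlonglongrightarrow> rho \<epsilon> p \<xi> \<eta>"
proof -
  have "convergent (\<lambda>n. visual_dist \<epsilon> p (bd_seq p \<xi> n) (bd_seq p \<eta> n))"
    using Cauchy_visual_dist[OF strong] visual_Cauchy_bd_seq[OF eps strong] assms(3,4)
    by (simp add: Cauchy_convergent)
  then obtain R where R: "(\<lambda>n. visual_dist \<epsilon> p (bd_seq p \<xi> n) (bd_seq p \<eta> n)) \<longlonglongrightarrow> R"
    by (auto simp: convergent_def)
  have "rho \<epsilon> p \<xi> \<eta> = R"
    using R unfolding visual_dist_def bd_seq_def
    by (intro rho_eq_if_tendsto[OF eps]) (simp add: bd_gromov_def)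
  with R show ?thesis by simp
qed

lemma gromov_ge_along_ray:
  assumes "geodesic_ray \<gamma>" "0 \<le> t" "dist (\<gamma> t) x \<le> C"
  shows "t - dist (\<gamma> 0) p - C \<le> gromov p (\<gamma> t) x"
proof -
  have "t = dist (\<gamma> t) (\<gamma> 0)"
    using assms(1,2) unfolding geodesic_ray_def by simp
  then have "t - dist (\<gamma> 0) p \<le> dist (\<gamma> t) p"
    using dist_triangle[of "\<gamma> t" "\<gamma> 0" p] by (simp add: dist_commute)
  then show ?thesis
    using gromov_ge_of_dist_le[OF assms(3), of p] by linarith
qed

text \<open>For large \<open>t\<close>, \<open>ys n\<close> is visually close to \<open>\<gamma>2 t\<close>, \<open>g (xs n)\<close> to \<open>g (\<gamma>1 t)\<close>,
  and these two points are at bounded distance but far from \<open>p\<close>.\<close>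
lemma visual_dist_tendsto_0_if_rays_close:
  assumes eps: "0 < \<epsilon>" and strong: "strongly_hyperbolic \<epsilon> p"
    and xs: "\<forall>M. \<exists>N T. \<forall>n\<ge>N. \<forall>t::real\<ge>T. M \<le> gromov p (xs n) (\<gamma>1 t)"
    and ys: "\<forall>M. \<exists>N T. \<forall>n\<ge>N. \<forall>t::real\<ge>T. M \<le> gromov p (ys n) (\<gamma>2 t)"
    and ray2: "geodesic_ray \<gamma>2"
    and close: "\<forall>t\<ge>0. dist (g (\<gamma>1 t)) (\<gamma>2 t) \<le> C"
    and g: "\<And>x y. dist (g x) (g y) = dist x y"
  shows "(\<lambda>n. visual_dist \<epsilon> p (ys n) (g (xs n))) \<longlonglongrightarrow> 0"
proof (rule LIMSEQ_I)
  fix e :: real assume e: "0 < e"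
  define M where "M = - ln (e/4) / \<epsilon>"
  have small: "visual_dist \<epsilon> p x y \<le> e/4" if "M \<le> gromov p x y" for x y
    using visual_dist_le_of_gromov_ge[OF eps _ that[unfolded M_def]] e by simp
  obtain N1 T1 where NT1: "\<forall>n\<ge>N1. \<forall>t\<ge>T1. M + dist (g p) p \<le> gromov p (xs n) (\<gamma>1 t)"
    using xs by blast
  obtain N2 T2 where NT2: "\<forall>n\<ge>N2. \<forall>t\<ge>T2. M \<le> gromov p (ys n) (\<gamma>2 t)"
    using ys by blast
  define t where "t = max (max T1 T2) (max 0 (M + C + dist (\<gamma>2 0) p))"
  have "0 \<le> t" "M + C + dist (\<gamma>2 0) p \<le> t"
    unfolding t_def by simp_all
  moreover have "t - dist (\<gamma>2 0) p - C \<le> gromov p (\<gamma>2 t) (g (\<gamma>1 t))"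
    using close \<open>0 \<le> t\<close> by (intro gromov_ge_along_ray[OF ray2]) (simp_all add: dist_commute)
  ultimately have "M \<le> gromov p (\<gamma>2 t) (g (\<gamma>1 t))"
    by linarith
  then have far: "visual_dist \<epsilon> p (\<gamma>2 t) (g (\<gamma>1 t)) \<le> e/4"
    by (rule small)
  have "visual_dist \<epsilon> p (ys n) (g (xs n)) < e" if "n \<ge> max N1 N2" for n
  proof -
    have "visual_dist \<epsilon> p (ys n) (\<gamma>2 t) \<le> e/4"
      using NT2 that small unfolding t_def by simp
    moreover have "M + dist (g p) p \<le> gromov p (xs n) (\<gamma>1 t)"
      using NT1 that unfolding t_def by simp
    then have "visual_dist \<epsilon> p (g (xs n)) (g (\<gamma>1 t)) \<le> e/4"
      using gromov_dist_preserving_ge[OF g, of p "xs n" "\<gamma>1 t"] small by simp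
    ultimately show ?thesis
      using far e visual_dist_triangle[OF strong, of "ys n" "g (xs n)" "\<gamma>2 t"]
        visual_dist_triangle[OF strong, of "g (xs n)" "\<gamma>2 t" "g (\<gamma>1 t)"]
      by linarith
  qed
  then show "\<exists>N. \<forall>n\<ge>N. norm (visual_dist \<epsilon> p (ys n) (g (xs n)) - 0) < e"
    by (intro exI[of _ "max N1 N2"]) (simp add: abs_of_pos visual_dist_pos)
qed

lemma some_mem_gromov_boundary:
  assumes "\<xi> \<in> gromov_boundary"
  shows "(SOME \<gamma>. \<gamma> \<in> \<xi>) \<in> \<xi>"
proof -
  obtain \<gamma> where "\<xi> = ray_class \<gamma>" "geodesic_ray \<gamma>"
    using assms unfolding gromov_boundary_def by blast
  then have "\<gamma> \<in> \<xi>"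
    unfolding ray_class_def by auto
  then show ?thesis
    by (rule someI[of "\<lambda>\<gamma>. \<gamma> \<in> \<xi>"])
qed

lemma bd_act_mem_gromov_boundary:
  assumes g: "\<And>x y. dist (g x) (g y) = dist x y" and \<xi>: "\<xi> \<in> gromov_boundary"
  shows "bd_act g \<xi> \<in> gromov_boundary"
proof -
  have "geodesic_ray (SOME \<gamma>. \<gamma> \<in> \<xi>)"
    using some_mem_gromov_boundary[OF \<xi>] \<xi> unfolding gromov_boundary_def ray_class_def by auto
  then have "geodesic_ray (g \<circ> (SOME \<gamma>. \<gamma> \<in> \<xi>))"
    unfolding geodesic_ray_def by (simp add: g)
  then show ?thesis
    unfolding bd_act_def gromov_boundary_def by blast
qed

lemma bd_act_rays_close:
  assumes g: "\<And>x y. dist (g x) (g y) = dist x y" and \<xi>: "\<xi> \<in> gromov_boundary"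
    and \<gamma>1: "\<gamma>1 \<in> \<xi>" and \<gamma>2: "\<gamma>2 \<in> bd_act g \<xi>"
  shows "\<exists>C. \<forall>t\<ge>0. dist (g (\<gamma>1 t)) (\<gamma>2 t) \<le> C"
proof -
  define \<gamma>0 where "\<gamma>0 = (SOME \<gamma>. \<gamma> \<in> \<xi>)"
  obtain \<gamma> where \<xi>_eq: "\<xi> = ray_class \<gamma>"
    using \<xi> unfolding gromov_boundary_def by blast
  obtain C0 C1 C2 where
    C0: "\<forall>t\<ge>0. dist (\<gamma> t) (\<gamma>0 t) \<le> C0" and C1: "\<forall>t\<ge>0. dist (\<gamma> t) (\<gamma>1 t) \<le> C1" and
    C2: "\<forall>t\<ge>0. dist (g (\<gamma>0 t)) (\<gamma>2 t) \<le> C2"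
    using some_mem_gromov_boundary[OF \<xi>] \<gamma>1 \<gamma>2
    unfolding \<gamma>0_def \<xi>_eq bd_act_def ray_class_def by auto
  have "dist (g (\<gamma>1 t)) (\<gamma>2 t) \<le> C1 + C0 + C2" if "t \<ge> 0" for t
  proof -
    have "dist (g (\<gamma>1 t)) (\<gamma>2 t) \<le> dist (\<gamma> t) (\<gamma>1 t) + dist (\<gamma> t) (\<gamma>0 t) + dist (g (\<gamma>0 t)) (\<gamma>2 t)"
      using dist_triangle[of "g (\<gamma>1 t)" "\<gamma>2 t" "g (\<gamma>0 t)"] dist_triangle3[of "\<gamma>1 t" "\<gamma>0 t" "\<gamma> t"] g
      by simp
    then show ?thesis
      using C0 C1 C2 that by force
  qed
  then show ?thesis by blast
qed

lemma visual_dist_tendsto_0_bd_act: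
  assumes eps: "0 < \<epsilon>" and strong: "strongly_hyperbolic \<epsilon> p"
    and g: "\<And>x y. dist (g x) (g y) = dist x y" and \<xi>: "\<xi> \<in> gromov_boundary"
    and xs: "conv_bd p xs \<xi>" and ys: "conv_bd p ys (bd_act g \<xi>)"
  shows "(\<lambda>n. visual_dist \<epsilon> p (ys n) (g (xs n))) \<longlonglongrightarrow> 0"
proof -
  obtain \<gamma>1 \<gamma>2 where \<gamma>1: "\<gamma>1 \<in> \<xi>" "\<forall>M. \<exists>N T. \<forall>n\<ge>N. \<forall>t::real\<ge>T. M \<le> gromov p (xs n) (\<gamma>1 t)"
    and \<gamma>2: "\<gamma>2 \<in> bd_act g \<xi>" "\<forall>M. \<exists>N T. \<forall>n\<ge>N. \<forall>t::real\<ge>T. M \<le> gromov p (ys n) (\<gamma>2 t)"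
    using xs ys unfolding conv_bd_def by blast
  obtain C where "\<forall>t\<ge>0. dist (g (\<gamma>1 t)) (\<gamma>2 t) \<le> C"
    using bd_act_rays_close[OF g \<xi> \<gamma>1(1) \<gamma>2(1)] by blast
  moreover have "geodesic_ray \<gamma>2"
    using \<gamma>2(1) unfolding bd_act_def ray_class_def by simp
  ultimately show ?thesis
    using visual_dist_tendsto_0_if_rays_close[OF eps strong \<gamma>1(2) \<gamma>2(2)] g by blast
qed

lemma isometry_dist: "isometry g \<Longrightarrow> dist (g x) (g y) = dist x y"
  unfolding isometry_def by blast

lemma isometry_inv_apply: "isometry g \<Longrightarrow> g (inv g x) = x"
  unfolding isometry_def by (simp add: bij_is_surj surj_f_inv_f)

lemma isometry_dist_inv:
  assumes "isometry g"
  shows "dist (inv g x) y = dist x (g y)"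
  using isometry_dist[OF assms, of "inv g x" y] by (simp add: isometry_inv_apply[OF assms])

lemma busemann_bd_act_orbit:
  assumes eps: "0 < \<epsilon>" and strong: "strongly_hyperbolic \<epsilon> p"
    and g: "isometry g" and \<xi>: "\<xi> \<in> gromov_boundary"
  shows "busemann p (bd_act g \<xi>) (g p) = 2 * gromov_lim p (bd_seq p \<xi>) (inv g p) - dist p (inv g p)"
proof -
  define q where "q = inv g p"
  define xs where "xs = bd_seq p \<xi>"
  define ys where "ys = bd_seq p (bd_act g \<xi>)"
  have gq: "g q = p" and g_dist: "\<And>x y. dist (g x) (g y) = dist x y"
    unfolding q_def using g by (simp_all add: isometry_inv_apply isometry_dist)
  have \<xi>': "bd_act g \<xi> \<in> gromov_boundary"
    by (rule bd_act_mem_gromov_boundary[OF g_dist \<xi>])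
  have xs_Cauchy: "visual_Cauchy \<epsilon> p xs"
    unfolding xs_def by (rule visual_Cauchy_bd_seq[OF eps strong \<xi>])
  have "gromov_lim p ys (g p) = gromov_lim p (\<lambda>n. g (xs n)) (g p)"
  proof (rule gromov_lim_eq_if_visual_dist_tendsto_0[OF eps strong])
    show "visual_Cauchy \<epsilon> p ys"
      unfolding ys_def by (rule visual_Cauchy_bd_seq[OF eps strong \<xi>'])
    show "visual_Cauchy \<epsilon> p (\<lambda>n. g (xs n))"
      by (rule visual_Cauchy_dist_preserving[OF eps g_dist xs_Cauchy])
    show "(\<lambda>n. visual_dist \<epsilon> p (ys n) (g (xs n))) \<longlonglongrightarrow> 0"
      unfolding xs_def ys_def
      by (rule visual_dist_tendsto_0_bd_act[OF eps strong g_dist \<xi> conv_bd_bd_seq[OF \<xi>] conv_bd_bd_seq[OF \<xi>']])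
  qed
  also have "\<dots> = dist p q - gromov_lim p xs q"
    by (rule gromov_lim_dist_preserving[OF eps strong xs_Cauchy g_dist gq])
  finally have "gromov_lim p ys (g p) = dist p q - gromov_lim p xs q" .
  moreover have "dist (g p) p = dist p q"
    using g_dist[of p q] gq by simp
  moreover have "busemann p (bd_act g \<xi>) (g p) = dist (g p) p - 2 * gromov_lim p ys (g p)"
    unfolding ys_def by (rule busemann_eq_gromov_lim[OF eps strong \<xi>'])
  ultimately show ?thesis
    unfolding q_def[symmetric] xs_def[symmetric] by linarith
qed

lemma abs_diff_le_exp_diff:
  fixes a b D \<epsilon> :: real
  assumes eps: "0 < \<epsilon>" and "a \<le> D" "b \<le> D"
  shows "\<bar>a - b\<bar> \<le> exp (\<epsilon> * D) / \<epsilon> * \<bar>exp (- \<epsilon> * a) - exp (- \<epsilon> * b)\<bar>"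
proof -
  have mvt: "b - a \<le> exp (\<epsilon> * D) / \<epsilon> * (exp (- \<epsilon> * a) - exp (- \<epsilon> * b))"
    if "a \<le> b" "b \<le> D" for a b
  proof -
    have "exp (- \<epsilon> * D) * (\<epsilon> * (b - a)) \<le> exp (- \<epsilon> * b) * (\<epsilon> * (b - a))"
      using that eps by (intro mult_right_mono) auto
    also have "\<dots> \<le> exp (- \<epsilon> * b) * (exp (\<epsilon> * (b - a)) - 1)"
      using exp_ge_add_one_self[of "\<epsilon> * (b - a)"] by (simp add: mult_left_mono add.commute le_diff_eq)
    also have "\<dots> = exp (- \<epsilon> * a) - exp (- \<epsilon> * b)"
      by (simp add: algebra_simps flip: exp_add)
    finally have "exp (\<epsilon> * D) / \<epsilon> * (exp (- \<epsilon> * D) * (\<epsilon> * (b - a)))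
        \<le> exp (\<epsilon> * D) / \<epsilon> * (exp (- \<epsilon> * a) - exp (- \<epsilon> * b))"
      using eps by (intro mult_left_mono) auto
    moreover have "exp (\<epsilon> * D) / \<epsilon> * (exp (- \<epsilon> * D) * (\<epsilon> * (b - a))) = b - a"
      using eps by (simp add: exp_minus)
    ultimately show ?thesis by linarith
  qed
  show ?thesis
  proof (cases "a \<le> b")
    case True
    then have "exp (- \<epsilon> * b) \<le> exp (- \<epsilon> * a)"
      using eps by simp
    then show ?thesis
      using mvt[OF True assms(3)] True by (simp only: abs_of_nonneg abs_of_nonpos diff_ge_0_iff_ge)
  next
    case False
    then have "exp (- \<epsilon> * a) \<le> exp (- \<epsilon> * b)"
      using eps by simp
    then show ?thesis
      using mvt[of b a] False assms(2) by (simp add: abs_of_nonpos)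
  qed
qed

lemma abs_busemann_bd_act_orbit_diff_le:
  assumes eps: "0 < \<epsilon>" and strong: "strongly_hyperbolic \<epsilon> p"
    and g1: "isometry g1" and g2: "isometry g2"
    and \<xi>1: "\<xi>1 \<in> gromov_boundary" and \<xi>2: "\<xi>2 \<in> gromov_boundary"
    and D: "dist p (inv g2 p) \<le> D"
  shows "\<bar>busemann p (bd_act g1 \<xi>1) (g1 p) - busemann p (bd_act g2 \<xi>2) (g2 p)\<bar>
    \<le> 3 * dist (inv g1 p) (inv g2 p) + 2 * exp (\<epsilon> * D) / \<epsilon> * rho \<epsilon> p \<xi>1 \<xi>2"
proof -
  define q1 q2 where "q1 = inv g1 p" and "q2 = inv g2 p"
  define xs1 xs2 where "xs1 = bd_seq p \<xi>1" and "xs2 = bd_seq p \<xi>2"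
  have xs1: "visual_Cauchy \<epsilon> p xs1" and xs2: "visual_Cauchy \<epsilon> p xs2"
    unfolding xs1_def xs2_def using visual_Cauchy_bd_seq[OF eps strong] \<xi>1 \<xi>2 by blast+
  have dist_diff: "\<bar>dist p q1 - dist p q2\<bar> \<le> dist q1 q2"
    using abs_dist_diff_le[of q1 p q2] by (simp add: dist_commute)
  have point_diff: "\<bar>gromov_lim p xs1 q1 - gromov_lim p xs1 q2\<bar> \<le> dist q1 q2"
    by (rule abs_gromov_lim_diff_le[OF eps strong xs1])
  have "gromov_lim p xs1 q2 \<le> D" "gromov_lim p xs2 q2 \<le> D"
    using gromov_lim_le_dist[OF eps strong xs1, of q2] gromov_lim_le_dist[OF eps strong xs2, of q2] D
    unfolding q2_def by (simp_all add: dist_commute)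
  then have "\<bar>gromov_lim p xs1 q2 - gromov_lim p xs2 q2\<bar>
      \<le> exp (\<epsilon> * D) / \<epsilon> * \<bar>exp (- \<epsilon> * gromov_lim p xs1 q2) - exp (- \<epsilon> * gromov_lim p xs2 q2)\<bar>"
    by (rule abs_diff_le_exp_diff[OF eps])
  also have "\<dots> \<le> exp (\<epsilon> * D) / \<epsilon> * rho \<epsilon> p \<xi>1 \<xi>2"
  proof (rule mult_left_mono)
    show "\<bar>exp (- \<epsilon> * gromov_lim p xs1 q2) - exp (- \<epsilon> * gromov_lim p xs2 q2)\<bar> \<le> rho \<epsilon> p \<xi>1 \<xi>2"
      using visual_dist_bd_seq_tendsto_rho[OF eps strong \<xi>1 \<xi>2] unfolding xs1_def[symmetric] xs2_def[symmetric]
      by (rule abs_exp_gromov_lim_diff_le[OF eps strong xs1 xs2])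
  qed (use eps in simp)
  finally have boundary_diff: "\<bar>gromov_lim p xs1 q2 - gromov_lim p xs2 q2\<bar> \<le> exp (\<epsilon> * D) / \<epsilon> * rho \<epsilon> p \<xi>1 \<xi>2" .
  show ?thesis
    unfolding busemann_bd_act_orbit[OF eps strong g1 \<xi>1] busemann_bd_act_orbit[OF eps strong g2 \<xi>2]
      q1_def[symmetric] q2_def[symmetric] xs1_def[symmetric] xs2_def[symmetric]
    using dist_diff point_diff boundary_diff by (simp add: abs_le_iff; linarith)
qed

lemma bounded_range_inv_orbit:
  assumes isom: "\<And>\<omega>. isometry (A \<omega>)"
    and compact: "compact (UNIV :: 'w::metric_space set)" and cont: "continuous_on UNIV (\<lambda>\<omega>::'w. A \<omega> p)"
  shows "bounded (range (\<lambda>\<omega>. inv (A \<omega>) p))"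
proof -
  have "bounded (range (\<lambda>\<omega>. A \<omega> p))"
    using compact cont by (intro compact_imp_bounded compact_continuous_image)
  moreover have "dist p (inv (A \<omega>) p) = dist p (A \<omega> p)" for \<omega>
    using isometry_dist_inv[OF isom, of \<omega> p p] by (simp add: dist_commute)
  ultimately show ?thesis
    unfolding bounded_any_center[where a = p] by auto
qed

lemma hoelder_inv_orbit:
  assumes isom: "\<And>\<omega>. isometry (A \<omega>)"
    and hoelder: "\<forall>\<omega>1 \<omega>2. \<forall>h\<in>range (\<lambda>\<omega>. inv (A \<omega>) p). dist (A \<omega>1 h) (A \<omega>2 h) \<le> C * dist \<omega>1 \<omega>2 powr \<tau>"
  shows "dist (inv (A \<omega>1) p) (inv (A \<omega>2) p) \<le> C * dist \<omega>1 \<omega>2 powr \<tau>"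
proof -
  have "dist (inv (A \<omega>1) p) (inv (A \<omega>2) p) = dist (A \<omega>2 (inv (A \<omega>2) p)) (A \<omega>1 (inv (A \<omega>2) p))"
    by (simp add: isometry_dist_inv[OF isom] isometry_inv_apply[OF isom])
  also have "\<dots> \<le> C * dist \<omega>2 \<omega>1 powr \<tau>"
    using hoelder by blast
  finally show ?thesis
    by (simp add: dist_commute)
qed

theorem propositionA8:
  fixes T :: "'w::metric_space \<Rightarrow> 'w"
    and A :: "'w \<Rightarrow> 'h::metric_space \<Rightarrow> 'h"
    and \<alpha> :: "'w \<Rightarrow> (real \<Rightarrow> 'h) set"
    and p :: 'h and \<epsilon> \<tau> :: real
  assumes compact_\<Omega>: "compact (UNIV :: 'w set)"
    and homeo: "\<exists>T'. homeomorphism UNIV UNIV T T'"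
    and proper: "proper_space TYPE('h)"
    and unique_geod: "unique_geodesic_space TYPE('h)"
    and hyperbolic: "gromov_hyperbolic TYPE('h)"
    and visibility: "unique_visibility TYPE('h)"
    and eps: "\<epsilon> > 0"
    and strong: "strongly_hyperbolic \<epsilon> p"
    and isom: "\<And>\<omega>. isometry (A \<omega>)"
    and A_cont: "\<And>K \<omega>0 \<eta>. bounded K \<Longrightarrow> \<eta> > 0 \<Longrightarrow>
        \<exists>d>0. \<forall>\<omega>. dist \<omega> \<omega>0 < d \<longrightarrow> (\<forall>h\<in>K. dist (A \<omega> h) (A \<omega>0 h) < \<eta>)"
    and \<alpha>_bd: "\<And>\<omega>. \<alpha> \<omega> \<in> gromov_boundary"
    and \<alpha>_cont: "\<And>\<omega>0 e. e > 0 \<Longrightarrow>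
        \<exists>d>0. \<forall>\<omega>. dist \<omega> \<omega>0 < d \<longrightarrow> rho \<epsilon> p (\<alpha> \<omega>) (\<alpha> \<omega>0) < e"
    and equivariant: "\<And>\<omega>. bd_act (A \<omega>) (\<alpha> \<omega>) = \<alpha> (T \<omega>)"
    and tau: "0 < \<tau>" "\<tau> \<le> 1"
    and A_hoelder: "\<And>K. bounded K \<Longrightarrow>
        \<exists>C. \<forall>\<omega>1 \<omega>2. \<forall>h\<in>K. dist (A \<omega>1 h) (A \<omega>2 h) \<le> C * dist \<omega>1 \<omega>2 powr \<tau>"
    and \<alpha>_hoelder: "\<exists>C. \<forall>\<omega>1 \<omega>2. rho \<epsilon> p (\<alpha> \<omega>1) (\<alpha> \<omega>2) \<le> C * dist \<omega>1 \<omega>2 powr \<tau>"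
  shows "\<exists>C. \<forall>\<omega>1 \<omega>2.
      \<bar>(- busemann p (\<alpha> (T \<omega>1)) (A \<omega>1 p)) - (- busemann p (\<alpha> (T \<omega>2)) (A \<omega>2 p))\<bar>
        \<le> C * dist \<omega>1 \<omega>2 powr \<tau>"
proof -
  define \<phi> where "\<phi> \<omega> = - busemann p (\<alpha> (T \<omega>)) (A \<omega> p)" for \<omega>
  define q where "q \<omega> = inv (A \<omega>) p" for \<omega>
  have "continuous_on UNIV (\<lambda>\<omega>. A \<omega> p)"
    unfolding continuous_on_iff using A_cont[of "{p}"] by auto
  then have q_bounded: "bounded (range q)"
    unfolding q_def by (rule bounded_range_inv_orbit[OF isom compact_\<Omega>])
  then obtain D where D: "\<And>\<omega>. dist p (q \<omega>) \<le> D"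
    unfolding bounded_any_center[where a = p] by blast
  obtain Cq where "\<forall>\<omega>1 \<omega>2. \<forall>h\<in>range q. dist (A \<omega>1 h) (A \<omega>2 h) \<le> Cq * dist \<omega>1 \<omega>2 powr \<tau>"
    using A_hoelder[OF q_bounded] by blast
  then have Cq: "dist (q \<omega>1) (q \<omega>2) \<le> Cq * dist \<omega>1 \<omega>2 powr \<tau>" for \<omega>1 \<omega>2
    unfolding q_def by (rule hoelder_inv_orbit[OF isom])
  obtain C\<alpha> where C\<alpha>: "\<And>\<omega>1 \<omega>2. rho \<epsilon> p (\<alpha> \<omega>1) (\<alpha> \<omega>2) \<le> C\<alpha> * dist \<omega>1 \<omega>2 powr \<tau>"
    using \<alpha>_hoelder by blast
  define k where "k = 2 * exp (\<epsilon> * D) / \<epsilon>"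
  have "\<bar>\<phi> \<omega>1 - \<phi> \<omega>2\<bar> \<le> (3 * Cq + k * C\<alpha>) * dist \<omega>1 \<omega>2 powr \<tau>" for \<omega>1 \<omega>2
  proof -
    have "\<bar>\<phi> \<omega>1 - \<phi> \<omega>2\<bar> \<le> 3 * dist (q \<omega>1) (q \<omega>2) + k * rho \<epsilon> p (\<alpha> \<omega>1) (\<alpha> \<omega>2)"
      using abs_busemann_bd_act_orbit_diff_le[OF eps strong isom[of \<omega>1] isom[of \<omega>2]
          \<alpha>_bd[of \<omega>1] \<alpha>_bd[of \<omega>2] D[of \<omega>2, unfolded q_def], unfolded equivariant]
      unfolding \<phi>_def q_def k_def by (simp add: abs_minus_commute)
    also have "\<dots> \<le> 3 * (Cq * dist \<omega>1 \<omega>2 powr \<tau>) + k * (C\<alpha> * dist \<omega>1 \<omega>2 powr \<tau>)"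
      using Cq C\<alpha> eps unfolding k_def by (intro add_mono mult_left_mono) auto
    finally show ?thesis
      by (simp add: algebra_simps)
  qed
  then show ?thesis
    unfolding \<phi>_def by blast
qed

end
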